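(* Let $(S,\le)$ be a poset. The following are equivalent: (1) the $\mathbb{B}$-module $\mathbb{B}(S,\le)$ is projective; (2) the poset $\mathbb{B}(S,\le)$ (ordered by inclusion) is lower finite; (3) $(S,\le)$ is lower finite.
   Context: $\mathbb{B}=\{-\infty,0\}$ is the Boolean semifield; $\mathbb{B}$-modules are join-semilattices with least element, homomorphisms preserve finite joins; a module is projective if every surjection onto it has a section. $\mathbb{B}(S,\le)$ is the set of lower subsets of $S$ which are downward closures of finite subsets, under union (the free $\mathbb{B}$-module on the poset). A poset is lower finite if for every element $X$ the set of elements $\le X$ is finite. *)

theory Defs
  imports Main
begin

text \<open>A \<open>\<bool>\<close>-module: a join-semilattice with least element, given by a carrier set,
  a binary join operation and a least element (the join identity).\<close>
definition bmodule :: "'b set \<Rightarrow> ('b \<Rightarrow> 'b \<Rightarrow> 'b) \<Rightarrow> 'b \<Rightarrow> bool" where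
  "bmodule M j z \<longleftrightarrow>
     z \<in> M \<and> (\<forall>x\<in>M. \<forall>y\<in>M. j x y \<in> M) \<and>
     (\<forall>x\<in>M. \<forall>y\<in>M. \<forall>w\<in>M. j (j x y) w = j x (j y w)) \<and>
     (\<forall>x\<in>M. \<forall>y\<in>M. j x y = j y x) \<and>
     (\<forall>x\<in>M. j x x = x) \<and>
     (\<forall>x\<in>M. j z x = x)"

definition bhom :: "'b set \<Rightarrow> ('b \<Rightarrow> 'b \<Rightarrow> 'b) \<Rightarrow> 'b \<Rightarrow> 'c set \<Rightarrow> ('c \<Rightarrow> 'c \<Rightarrow> 'c) \<Rightarrow> 'c
                     \<Rightarrow> ('b \<Rightarrow> 'c) \<Rightarrow> bool" where
  "bhom M j z N j' z' f \<longleftrightarrow>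
     (\<forall>x\<in>M. f x \<in> N) \<and> f z = z' \<and> (\<forall>x\<in>M. \<forall>y\<in>M. f (j x y) = j' (f x) (f y))"

text \<open>Projectivity, tested against all \<open>\<bool>\<close>-modules whose carrier lives in the type \<open>'b\<close>:
  every surjective homomorphism onto \<open>P\<close> has a (homomorphic) section.\<close>
definition bprojective_in :: "'b itself \<Rightarrow> 'p set \<Rightarrow> ('p \<Rightarrow> 'p \<Rightarrow> 'p) \<Rightarrow> 'p \<Rightarrow> bool" where
  "bprojective_in _ P jp zp \<longleftrightarrow>
     (\<forall>(M::'b set) j z f. bmodule M j z \<and> bhom M j z P jp zp f \<and> f ` M = P \<longrightarrow>
        (\<exists>g. bhom P jp zp M j z g \<and> (\<forall>x\<in>P. f (g x) = x)))"

definition down_closure :: "'a::order set \<Rightarrow> 'a set" where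
  "down_closure F = {y. \<exists>x\<in>F. y \<le> x}"

definition Bfree :: "'a::order set set" where
  "Bfree = {X. \<exists>F. finite F \<and> X = down_closure F}"

definition lower_finite :: "'a set \<Rightarrow> ('a \<Rightarrow> 'a \<Rightarrow> bool) \<Rightarrow> bool" where
  "lower_finite A r \<longleftrightarrow> (\<forall>x\<in>A. finite {y\<in>A. r y x})"

end

theory Submission
  imports Defs
begin

text \<open>
  If \<open>S\<close> is lower finite, every element of \<open>\<bool>(S,\<le>)\<close> is a finite set, hence has only finitely
  many subsets; conversely the principal ideals \<open>\<down>x\<close> embed \<open>S\<close> order-isomorphically into
  \<open>\<bool>(S,\<le>)\<close>. For projectivity, a surjection \<open>f\<close> onto \<open>\<bool>(S,\<le>)\<close> is split by choosing
  a preimage \<open>m x\<close> of every \<open>\<down>x\<close> and sending a (finite) \<open>X\<close> to the join of the \<open>m x\<close>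
  with \<open>x \<in> X\<close>. Conversely, split the surjection from finite sets of points,
  \<open>F \<mapsto> \<down>F\<close>, by a section \<open>g\<close>: every \<open>y \<le> x\<close> must occur among the finitely many points
  of \<open>g (\<down>x)\<close>.
\<close>

lemma down_closure_singleton: "down_closure {x} = {y. y \<le> (x::'a::order)}"
  by (auto simp: down_closure_def)

lemma down_closure_Un: "down_closure (A \<union> B) = down_closure A \<union> down_closure (B::'a::order set)"
  by (auto simp: down_closure_def)

lemma down_closure_empty [simp]: "down_closure {} = ({}::'a::order set)"
  by (auto simp: down_closure_def)

lemma down_closure_in_Bfree: "finite F \<Longrightarrow> down_closure (F::'a::order set) \<in> Bfree"
  unfolding Bfree_def by blast

lemma principal_in_Bfree: "{y. y \<le> (x::'a::order)} \<in> Bfree"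
  using down_closure_in_Bfree[of "{x}"] by (simp add: down_closure_singleton)

lemma UN_down_closure_singleton_Bfree:
  "X \<in> Bfree \<Longrightarrow> (\<Union>y\<in>X. down_closure {y}) = (X::'a::order set)"
  unfolding Bfree_def down_closure_def by (auto intro: order.trans)

lemma finite_Bfree:
  fixes X :: "'a::order set"
  assumes "lower_finite (UNIV :: 'a set) (\<le>)" and "X \<in> Bfree"
  shows "finite X"
proof -
  obtain F where F: "finite F" "X = down_closure F"
    using assms(2) unfolding Bfree_def by blast
  then have "X = (\<Union>x\<in>F. {y. y \<le> x})"
    by (auto simp: down_closure_def)
  with F(1) assms(1) show ?thesis
    unfolding lower_finite_def by auto
qed

lemma lower_finite_Bfree_iff:
  "lower_finite (Bfree :: 'a::order set set) (\<subseteq>) \<longleftrightarrow> lower_finite (UNIV :: 'a set) (\<le>)"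
proof
  assume fin: "lower_finite (Bfree :: 'a set set) (\<subseteq>)"
  show "lower_finite (UNIV :: 'a set) (\<le>)"
    unfolding lower_finite_def
  proof
    fix x :: 'a
    let ?principal = "\<lambda>y::'a. down_closure {y}"
    have "?principal ` {y. y \<le> x} \<subseteq> {A \<in> Bfree. A \<subseteq> ?principal x}"
      by (auto simp: down_closure_singleton principal_in_Bfree)
    moreover have "finite {A \<in> Bfree. A \<subseteq> ?principal x}"
      using fin down_closure_in_Bfree[of "{x}"] unfolding lower_finite_def by blast
    moreover have "inj_on ?principal {y. y \<le> x}"
      by (auto simp: inj_on_def down_closure_singleton intro: order.antisym)
    ultimately show "finite {y \<in> UNIV. y \<le> x}"
      by (simp add: finite_image_iff[symmetric] finite_subset)
  qed
next
  assume "lower_finite (UNIV :: 'a set) (\<le>)"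
  then have "finite (Pow X)" if "X \<in> Bfree" for X :: "'a set"
    using finite_Bfree that by blast
  then show "lower_finite (Bfree :: 'a set set) (\<subseteq>)"
    unfolding lower_finite_def by (auto intro: finite_subset[rotated])
qed

text \<open>The order of a \<open>\<bool>\<close>-module is \<open>a \<le> u \<longleftrightarrow> j a u = u\<close>; \<open>a\<close> is the join of \<open>A\<close> when its
  upper bounds in \<open>M\<close> are exactly those of \<open>A\<close>.\<close>

definition is_bsup :: "'b set \<Rightarrow> ('b \<Rightarrow> 'b \<Rightarrow> 'b) \<Rightarrow> 'b set \<Rightarrow> 'b \<Rightarrow> bool" where
  "is_bsup M j A a \<longleftrightarrow> (\<forall>u\<in>M. j a u = u \<longleftrightarrow> (\<forall>b\<in>A. j b u = u))"

definition bsup :: "'b set \<Rightarrow> ('b \<Rightarrow> 'b \<Rightarrow> 'b) \<Rightarrow> 'b set \<Rightarrow> 'b" where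
  "bsup M j A = (THE a. a \<in> M \<and> is_bsup M j A a)"

context
  fixes M :: "'b set" and j :: "'b \<Rightarrow> 'b \<Rightarrow> 'b" and z :: 'b
  assumes bmod: "bmodule M j z"
begin

private lemma
  shows zero_in: "z \<in> M"
    and join_closed: "\<And>x y. x \<in> M \<Longrightarrow> y \<in> M \<Longrightarrow> j x y \<in> M"
    and join_assoc: "\<And>x y w. x \<in> M \<Longrightarrow> y \<in> M \<Longrightarrow> w \<in> M \<Longrightarrow> j (j x y) w = j x (j y w)"
    and join_commute: "\<And>x y. x \<in> M \<Longrightarrow> y \<in> M \<Longrightarrow> j x y = j y x"
    and join_idem: "\<And>x. x \<in> M \<Longrightarrow> j x x = x"
    and join_zero: "\<And>x. x \<in> M \<Longrightarrow> j z x = x"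
  using bmod unfolding bmodule_def by auto

lemma bmodule_join_le_iff:
  assumes "a \<in> M" "b \<in> M" "u \<in> M"
  shows "j (j a b) u = u \<longleftrightarrow> j a u = u \<and> j b u = u"
proof
  assume ab: "j (j a b) u = u"
  have "j a u = j (j a (j a b)) u"
    using ab assms by (simp add: join_assoc join_closed)
  also have "j a (j a b) = j a b"
    using assms by (simp flip: join_assoc add: join_idem)
  finally have a: "j a u = u" using ab by simp
  have "j b u = j (j b (j a b)) u"
    using ab assms by (simp add: join_assoc join_closed)
  also have "j b (j a b) = j a b"
    using assms join_assoc[of b a b] join_commute[of a b] join_assoc[of a b b] join_idem[of b] by simp
  finally have b: "j b u = u" using ab by simp
  from a b show "j a u = u \<and> j b u = u" ..
next
  assume "j a u = u \<and> j b u = u"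
  then show "j (j a b) u = u"
    using assms by (simp add: join_assoc)
qed

lemma is_bsup_unique:
  assumes "a \<in> M" "b \<in> M" "is_bsup M j A a" "is_bsup M j A b"
  shows "a = b"
proof -
  have "j a b = b" "j b a = a"
    using assms join_idem unfolding is_bsup_def by blast+
  with assms(1,2) show ?thesis by (metis join_commute)
qed

lemma is_bsup_empty: "is_bsup M j {} z"
  unfolding is_bsup_def by (simp add: join_zero)

lemma is_bsup_Un:
  assumes "a \<in> M" "b \<in> M" "is_bsup M j A a" "is_bsup M j B b"
  shows "is_bsup M j (A \<union> B) (j a b)"
  using assms bmodule_join_le_iff unfolding is_bsup_def by auto

lemma finite_bsup_exists:
  assumes "finite A" "A \<subseteq> M"
  shows "\<exists>a\<in>M. is_bsup M j A a"
  using assms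
proof (induction A rule: finite_induct)
  case empty
  show ?case using zero_in is_bsup_empty by blast
next
  case (insert b A)
  then obtain a where "a \<in> M" "is_bsup M j A a" by auto
  moreover have "is_bsup M j {b} b"
    unfolding is_bsup_def by simp
  ultimately show ?case
    using insert.prems is_bsup_Un[of b a "{b}" A] join_closed by auto
qed

lemma
  assumes "finite A" "A \<subseteq> M"
  shows bsup_closed: "bsup M j A \<in> M" and is_bsup_bsup: "is_bsup M j A (bsup M j A)"
proof -
  obtain a where "a \<in> M" "is_bsup M j A a"
    using finite_bsup_exists assms by blast
  then have "bsup M j A = a"
    unfolding bsup_def by (blast intro: the_equality is_bsup_unique)
  with \<open>a \<in> M\<close> \<open>is_bsup M j A a\<close>
  show "bsup M j A \<in> M" "is_bsup M j A (bsup M j A)" by simp_all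
qed

lemma bsup_eqI: "a \<in> M \<Longrightarrow> finite A \<Longrightarrow> A \<subseteq> M \<Longrightarrow> is_bsup M j A a \<Longrightarrow> bsup M j A = a"
  by (metis bsup_closed is_bsup_bsup is_bsup_unique)

lemma bsup_empty: "bsup M j {} = z"
  using bsup_eqI zero_in is_bsup_empty by blast

lemma bsup_singleton: "b \<in> M \<Longrightarrow> bsup M j {b} = b"
  by (rule bsup_eqI) (simp_all add: is_bsup_def)

lemma bsup_Un:
  assumes "finite A" "A \<subseteq> M" "finite B" "B \<subseteq> M"
  shows "bsup M j (A \<union> B) = j (bsup M j A) (bsup M j B)"
proof (rule bsup_eqI)
  show "j (bsup M j A) (bsup M j B) \<in> M"
    using assms by (simp add: bsup_closed join_closed)
  show "is_bsup M j (A \<union> B) (j (bsup M j A) (bsup M j B))"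
    using assms by (simp add: bsup_closed is_bsup_bsup is_bsup_Un)
qed (use assms in auto)

lemma bhom_bsup:
  assumes "bhom M j z N (\<union>) {} f" "finite A" "A \<subseteq> M"
  shows "f (bsup M j A) = \<Union>(f ` A)"
  using assms(2,3)
proof (induction A rule: finite_induct)
  case empty
  show ?case using assms(1) bsup_empty unfolding bhom_def by simp
next
  case (insert b A)
  then have "bsup M j (insert b A) = j b (bsup M j A)"
    using bsup_Un[of "{b}" A] bsup_singleton by simp
  with insert assms(1) bsup_closed[of A] show ?case
    unfolding bhom_def by simp
qed

end

lemma bprojective_Bfree_if_lower_finite:
  assumes "lower_finite (UNIV :: 'a::order set) (\<le>)"
  shows "bprojective_in TYPE('b) (Bfree :: 'a set set) (\<union>) {}"
  unfolding bprojective_in_def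
proof (intro allI impI)
  fix M :: "'b set" and j z and f :: "'b \<Rightarrow> 'a set"
  assume "bmodule M j z \<and> bhom M j z Bfree (\<union>) {} f \<and> f ` M = Bfree"
  then have bmod: "bmodule M j z" and hom: "bhom M j z Bfree (\<union>) {} f" and onto: "f ` M = Bfree"
    by auto
  have "\<exists>a\<in>M. f a = down_closure {y}" for y :: 'a
    using onto down_closure_in_Bfree[of "{y}"] by (metis finite.intros imageE)
  then obtain m :: "'a \<Rightarrow> 'b" where m: "\<And>y. m y \<in> M" "\<And>y. f (m y) = down_closure {y}"
    by metis
  define g where "g X = bsup M j (m ` X)" for X :: "'a set"
  have fin: "finite X" if "X \<in> Bfree" for X :: "'a set"
    using finite_Bfree assms that by blast
  have mX: "m ` X \<subseteq> M" for X
    using m(1) by blast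
  have "bhom Bfree (\<union>) {} M j z g"
    unfolding bhom_def
  proof (intro conjI ballI)
    show "g X \<in> M" if "X \<in> Bfree" for X
      unfolding g_def using bsup_closed[OF bmod _ mX] fin[OF that] by blast
    show "g {} = z"
      unfolding g_def using bsup_empty[OF bmod] by simp
    show "g (X \<union> Y) = j (g X) (g Y)" if "X \<in> Bfree" "Y \<in> Bfree" for X Y
      unfolding g_def image_Un using bsup_Un[OF bmod _ mX _ mX] fin that by blast
  qed
  moreover have "f (g X) = X" if "X \<in> Bfree" for X
  proof -
    have "f (g X) = (\<Union>y\<in>X. f (m y))"
      unfolding g_def using bhom_bsup[OF bmod hom _ mX] fin[OF that] by (simp add: image_image)
    also have "\<dots> = X"
      using m(2) UN_down_closure_singleton_Bfree[OF that] by simp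
    finally show ?thesis .
  qed
  ultimately show "\<exists>g. bhom Bfree (\<union>) {} M j z g \<and> (\<forall>X\<in>Bfree. f (g X) = X)"
    by blast
qed

text \<open>Finite sets of singletons: the free \<open>\<bool>\<close>-module on the points of \<open>'a\<close>, realised inside
  the type \<open>'a set set set\<close> against which projectivity is tested.\<close>

definition finite_point_sets :: "'a set set set" where
  "finite_point_sets = {F. finite F \<and> F \<subseteq> range (\<lambda>x. {x})}"

lemma bmodule_finite_point_sets: "bmodule finite_point_sets (\<union>) {}"
  unfolding bmodule_def finite_point_sets_def by auto

lemma bhom_down_closure_Union:
  "bhom finite_point_sets (\<union>) {} (Bfree :: 'a::order set set) (\<union>) {} (\<lambda>F. down_closure (\<Union>F))"
  unfolding bhom_def finite_point_sets_def
  by (auto simp: down_closure_Un intro!: down_closure_in_Bfree)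

lemma down_closure_Union_onto_Bfree:
  "(\<lambda>F. down_closure (\<Union>F)) ` finite_point_sets = (Bfree :: 'a::order set set)"
proof
  show "(\<lambda>F. down_closure (\<Union>F)) ` finite_point_sets \<subseteq> (Bfree :: 'a set set)"
    using bhom_down_closure_Union unfolding bhom_def by blast
  show "(Bfree :: 'a set set) \<subseteq> (\<lambda>F. down_closure (\<Union>F)) ` finite_point_sets"
  proof
    fix X :: "'a set"
    assume "X \<in> Bfree"
    then obtain F where "finite F" "X = down_closure F"
      unfolding Bfree_def by blast
    then have "(\<lambda>x. {x}) ` F \<in> finite_point_sets" "X = down_closure (\<Union>((\<lambda>x. {x}) ` F))"
      unfolding finite_point_sets_def by auto
    then show "X \<in> (\<lambda>F. down_closure (\<Union>F)) ` finite_point_sets" by blast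
  qed
qed

lemma lower_finite_if_bprojective_Bfree:
  assumes "bprojective_in TYPE('a set set) (Bfree :: 'a::order set set) (\<union>) {}"
  shows "lower_finite (UNIV :: 'a set) (\<le>)"
proof -
  let ?f = "\<lambda>F::'a set set. down_closure (\<Union>F)"
  obtain g where g: "bhom Bfree (\<union>) {} finite_point_sets (\<union>) {} g" "\<forall>X\<in>Bfree. ?f (g X) = X"
    using assms bmodule_finite_point_sets bhom_down_closure_Union down_closure_Union_onto_Bfree
    unfolding bprojective_in_def by blast
  have principal: "down_closure {y} \<in> Bfree" for y :: 'a
    by (simp add: down_closure_in_Bfree)
  have section_principal: "?f (g (down_closure {y})) = {w. w \<le> y}" for y
    using g(2) principal by (simp add: down_closure_singleton)
  have g_mono: "g (down_closure {y}) \<subseteq> g (down_closure {x})" if "y \<le> x" for x y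
  proof -
    have "down_closure {y} \<union> down_closure {x} = down_closure {x}"
      using that by (auto simp: down_closure_singleton)
    then have "g (down_closure {x}) = g (down_closure {y}) \<union> g (down_closure {x})"
      using g(1) principal unfolding bhom_def by metis
    then show ?thesis by blast
  qed
  \<comment> \<open>The points of \<open>g (\<down>y)\<close> lie below \<open>y\<close> and some lies above \<open>y\<close>, so \<open>y\<close> itself is one of them.\<close>
  have self: "y \<in> \<Union>(g (down_closure {y}))" for y
  proof -
    obtain w where "w \<in> \<Union>(g (down_closure {y}))" "y \<le> w"
      using section_principal[of y] unfolding down_closure_def by blast
    moreover from this have "w \<le> y"
      using section_principal[of y] unfolding down_closure_def by blast
    ultimately show ?thesis by (metis order.antisym)
  qed
  show ?thesis
    unfolding lower_finite_def
  proof
    fix x :: 'a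
    have "{y \<in> UNIV. y \<le> x} \<subseteq> \<Union>(g (down_closure {x}))"
      using g_mono self by blast
    moreover have "g (down_closure {x}) \<in> finite_point_sets"
      using g(1) principal unfolding bhom_def by blast
    then have "finite (\<Union>(g (down_closure {x})))"
      unfolding finite_point_sets_def by auto
    ultimately show "finite {y \<in> UNIV. y \<le> x}"
      by (rule finite_subset)
  qed
qed

theorem mainTheorem9:
  shows "(lower_finite (Bfree :: 'a::order set set) (\<subseteq>) \<longleftrightarrow> lower_finite (UNIV :: 'a set) (\<le>))
       \<and> (lower_finite (UNIV :: 'a set) (\<le>) \<longrightarrow>
            bprojective_in TYPE('b) (Bfree :: 'a set set) (\<union>) {})
       \<and> (bprojective_in TYPE('a set set) (Bfree :: 'a set set) (\<union>) {} \<longrightarrow>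
            lower_finite (UNIV :: 'a set) (\<le>))"
  using lower_finite_Bfree_iff bprojective_Bfree_if_lower_finite lower_finite_if_bprojective_Bfree
  by blast

end
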